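(* Let $\boldsymbol\mu>\mathbf 0$ and assume $\mathbf I-\mathbf G$ is irreducible for every $\mathbf G\in\mathcal G(\boldsymbol\mu)$. Define $\beta^*(\boldsymbol\mu)=1/\max_{\mathbf G\in\mathcal G(\boldsymbol\mu)}\lambda(\mathbf I-\mathbf G)$. Then for $\beta>0$, there exists $\mathbf p\geq\mathbf 0$ with $\mathbf A(\beta\boldsymbol\mu)\mathbf p\geq\mathbf n(\beta\boldsymbol\mu)$ if and only if $\beta<\beta^*(\boldsymbol\mu)$; in particular $\sup\{\beta>0:\exists\,\mathbf p\geq\mathbf 0,\ \mathbf A(\beta\boldsymbol\mu)\mathbf p\geq\mathbf n(\beta\boldsymbol\mu)\}=\beta^*(\boldsymbol\mu)$.
   Context: Multicast system: $N$ transmitters; transmitter $T_i$ has $K_i\geq1$ receivers $R_i^{k}$, $k\in\mathcal K_i=\{1,\dots,K_i\}$. Channel gains $g_{r_i^{k},t_j}\geq 0$ (from $T_j$ to $R_i^k$) with $g_{r_i^{k},t_i}>0$; noise variance $\sigma^2>0$. For $\boldsymbol\mu\in\mathbb R^N$, $\mathbf a_i^{k}(\boldsymbol\mu)\in\mathbb R^{1\times N}$ is the row vector with $i$-th entry $1$ and $j$-th entry $-\mu_i g_{r_i^{k},t_j}/g_{r_i^{k},t_i}$ for $j\neq i$; $n_i^{k}(\boldsymbol\mu)=\mu_i\sigma^2/g_{r_i^{k},t_i}$. $\mathbf A(\boldsymbol\mu)$ stacks all rows $\mathbf a_i^{k}(\boldsymbol\mu)$, $\mathbf n(\boldsymbol\mu)$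 stacks the corresponding $n_i^k(\boldsymbol\mu)$. $\mathcal G(\boldsymbol\mu)$ is the set of $N\times N$ matrices whose $i$-th row is $\mathbf a_i^{k_i}(\boldsymbol\mu)$ for a choice $k_i\in\mathcal K_i$. $\lambda(\cdot)$ is the Perron–Frobenius eigenvalue (spectral radius). *)

theory Defs
  imports "Jordan_Normal_Form.Spectral_Radius"
begin

(* Conventions: transmitters are indexed i < N (0-based); transmitter i has
   receivers k < K i (0-based).  g i k j is the channel gain g_{r_i^k, t_j}
   from transmitter T_j to receiver R_i^k.  sigma2 is the noise variance. *)

definition a_entry :: "(nat \<Rightarrow> nat \<Rightarrow> nat \<Rightarrow> real) \<Rightarrow> (nat \<Rightarrow> real) \<Rightarrow> nat \<Rightarrow> nat \<Rightarrow> nat \<Rightarrow> real" where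
  "a_entry g mu i k j = (if j = i then 1 else - mu i * g i k j / g i k i)"

definition n_entry :: "(nat \<Rightarrow> nat \<Rightarrow> nat \<Rightarrow> real) \<Rightarrow> real \<Rightarrow> (nat \<Rightarrow> real) \<Rightarrow> nat \<Rightarrow> nat \<Rightarrow> real" where
  "n_entry g sigma2 mu i k = mu i * sigma2 / g i k i"

definition A_ge_n :: "nat \<Rightarrow> (nat \<Rightarrow> nat) \<Rightarrow> (nat \<Rightarrow> nat \<Rightarrow> nat \<Rightarrow> real) \<Rightarrow> real \<Rightarrow> (nat \<Rightarrow> real) \<Rightarrow> (nat \<Rightarrow> real) \<Rightarrow> bool" where
  "A_ge_n N K g sigma2 mu p \<longleftrightarrow>
     (\<forall>i<N. \<forall>k<K i. (\<Sum>j<N. a_entry g mu i k j * p j) \<ge> n_entry g sigma2 mu i k)"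

definition G_mat :: "nat \<Rightarrow> (nat \<Rightarrow> nat \<Rightarrow> nat \<Rightarrow> real) \<Rightarrow> (nat \<Rightarrow> real) \<Rightarrow> (nat \<Rightarrow> nat) \<Rightarrow> real mat" where
  "G_mat N g mu c = mat N N (\<lambda>(i, j). a_entry g mu i (c i) j)"

definition G_set :: "nat \<Rightarrow> (nat \<Rightarrow> nat) \<Rightarrow> (nat \<Rightarrow> nat \<Rightarrow> nat \<Rightarrow> real) \<Rightarrow> (nat \<Rightarrow> real) \<Rightarrow> real mat set" where
  "G_set N K g mu = {G_mat N g mu c | c. \<forall>i<N. c i < K i}"

text \<open>Spectral radius of a real square matrix (= Perron-Frobenius eigenvalue for
  nonnegative matrices).\<close>
definition rho :: "real mat \<Rightarrow> real" where
  "rho M = spectral_radius (map_mat complex_of_real M)"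

text \<open>For n \<ge> 2 this is strong connectivity; a 1x1 matrix is irreducible iff
  nonzero.\<close>
definition irreducible_mat :: "real mat \<Rightarrow> bool" where
  "irreducible_mat M \<longleftrightarrow>
     (\<forall>i<dim_row M. \<forall>j<dim_row M.
        (i, j) \<in> {(a, b). a < dim_row M \<and> b < dim_row M \<and> M $$ (a, b) \<noteq> 0}\<^sup>+)"

definition beta_star :: "nat \<Rightarrow> (nat \<Rightarrow> nat) \<Rightarrow> (nat \<Rightarrow> nat \<Rightarrow> nat \<Rightarrow> real) \<Rightarrow> (nat \<Rightarrow> real) \<Rightarrow> real" where
  "beta_star N K g mu = 1 / Max (rho ` (\<lambda>G. 1\<^sub>m N - G) ` G_set N K g mu)"

end

theory Submission
  imports Defs "HOL-Library.FuncSet"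
begin

text \<open>For a choice \<open>c\<close> of one receiver per transmitter, \<open>I - G\<close> is the nonnegative interference
  matrix \<open>B\<^sub>c\<close>, and \<open>A(\<beta>\<mu>) p \<ge> n(\<beta>\<mu>)\<close> says \<open>p\<^sub>i - \<beta> (B\<^sub>k p)\<^sub>i \<ge> n\<^sub>i\<^sub>k > 0\<close> for every row \<open>(i, k)\<close>.
  A feasible \<open>p\<close> is therefore strictly subinvariant for every \<open>\<beta> B\<^sub>c\<close>, which forces
  \<open>\<beta> \<rho>(B\<^sub>c) < 1\<close> (Collatz-Wielandt). Conversely, if \<open>\<beta> \<rho>(B\<^sub>c) < 1\<close> for all \<open>c\<close>, every \<open>c\<close> has a
  Neumann solution \<open>v\<^sub>c = 1 + \<beta> B\<^sub>c v\<^sub>c\<close>. Changing a single row of \<open>c\<close> to one that violates the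
  constraint for \<open>v\<^sub>c\<close> strictly increases the solution, so for a choice maximising \<open>\<Sum> v\<^sub>c\<close> the
  vector \<open>v\<^sub>c\<close> satisfies all rows with slack 1, and a multiple of it is feasible.
  Irreducibility only serves to make the spectral radii positive, so that \<open>\<beta>\<^sup>*\<close> is the
  reciprocal of a positive number.\<close>

section \<open>Spectral radius of nonnegative matrices\<close>

definition matvec :: "nat \<Rightarrow> (nat \<Rightarrow> nat \<Rightarrow> real) \<Rightarrow> (nat \<Rightarrow> real) \<Rightarrow> nat \<Rightarrow> real" where
  "matvec N B x = (\<lambda>i. \<Sum>j<N. B i j * x j)"

definition cmat :: "nat \<Rightarrow> (nat \<Rightarrow> nat \<Rightarrow> real) \<Rightarrow> complex mat" where
  "cmat N B = mat N N (\<lambda>(i, j). complex_of_real (B i j))"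

lemma cmat_carrier [simp]: "cmat N B \<in> carrier_mat N N"
  and cmat_dim [simp]: "dim_row (cmat N B) = N" "dim_col (cmat N B) = N"
  by (simp_all add: cmat_def)

lemma row_cmat_scalar_prod [simp]:
  "i < N \<Longrightarrow> v \<in> carrier_vec N \<Longrightarrow> row (cmat N B) i \<bullet> v = (\<Sum>j<N. complex_of_real (B i j) * v $ j)"
  by (simp add: cmat_def scalar_prod_def row_def atLeast0LessThan)

lemma cmat_mult_vec_of_real:
  "cmat N B *\<^sub>v vec N (\<lambda>j. complex_of_real (w j)) = vec N (\<lambda>i. complex_of_real (matvec N B w i))"
  by (rule eq_vecI) (simp_all add: matvec_def)

lemma matvec_diff: "matvec N B (\<lambda>j. x j - y j) i = matvec N B x i - matvec N B y i"
  by (simp add: matvec_def sum_subtractf right_diff_distrib)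

lemma matvec_scale_matrix: "matvec N (\<lambda>i j. c * B i j) x i = c * matvec N B x i"
  by (simp add: matvec_def sum_distrib_left mult.assoc)

lemma matvec_nonneg:
  "\<forall>i<N. \<forall>j<N. 0 \<le> B i j \<Longrightarrow> \<forall>j<N. 0 \<le> x j \<Longrightarrow> i < N \<Longrightarrow> 0 \<le> matvec N B x i"
  by (auto simp: matvec_def intro!: sum_nonneg)

lemma eigenvalue_cmat_iff:
  "eigenvalue (cmat N B) l \<longleftrightarrow>
     (\<exists>v \<in> carrier_vec N. v \<noteq> 0\<^sub>v N \<and> (\<forall>i<N. (\<Sum>j<N. complex_of_real (B i j) * v $ j) = l * v $ i))"
proof -
  have "cmat N B *\<^sub>v v = l \<cdot>\<^sub>v v \<longleftrightarrow> (\<forall>i<N. (\<Sum>j<N. complex_of_real (B i j) * v $ j) = l * v $ i)"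
    if "v \<in> carrier_vec N" for v
    using that by (auto simp: vec_eq_iff)
  then show ?thesis
    unfolding eigenvalue_def eigenvector_def by auto
qed

lemma eigenvalue_cmat_scale:
  assumes "c \<noteq> 0"
  shows "eigenvalue (cmat N (\<lambda>i j. c * B i j)) (complex_of_real c * l) \<longleftrightarrow> eigenvalue (cmat N B) l"
proof -
  have sum_eq: "(\<Sum>j<N. complex_of_real (c * B i j) * v $ j)
      = complex_of_real c * (\<Sum>j<N. complex_of_real (B i j) * v $ j)" for i and v :: "complex vec"
    by (simp add: sum_distrib_left mult.assoc)
  have "(\<Sum>j<N. complex_of_real (c * B i j) * v $ j) = complex_of_real c * l * v $ i
      \<longleftrightarrow> (\<Sum>j<N. complex_of_real (B i j) * v $ j) = l * v $ i" for i and v :: "complex vec"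
    unfolding sum_eq using assms by (simp add: mult.assoc)
  then show ?thesis
    unfolding eigenvalue_cmat_iff by simp
qed

lemma spectrum_cmat_scale:
  assumes c: "c \<noteq> 0"
  shows "spectrum (cmat N (\<lambda>i j. c * B i j)) = (\<lambda>l. complex_of_real c * l) ` spectrum (cmat N B)"
proof (intro equalityI subsetI)
  fix l assume "l \<in> spectrum (cmat N (\<lambda>i j. c * B i j))"
  then have "eigenvalue (cmat N (\<lambda>i j. c * B i j)) (complex_of_real c * (l / complex_of_real c))"
    using c by (simp add: spectrum_def)
  then have "l / complex_of_real c \<in> spectrum (cmat N B)"
    unfolding spectrum_def by (simp only: mem_Collect_eq eigenvalue_cmat_scale[OF c])
  moreover have "l = complex_of_real c * (l / complex_of_real c)"
    using c by simp
  ultimately show "l \<in> (\<lambda>l. complex_of_real c * l) ` spectrum (cmat N B)"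
    by (rule rev_image_eqI)
next
  fix l assume "l \<in> (\<lambda>l. complex_of_real c * l) ` spectrum (cmat N B)"
  then obtain l' where "eigenvalue (cmat N B) l'" and l: "l = complex_of_real c * l'"
    unfolding spectrum_def by blast
  then show "l \<in> spectrum (cmat N (\<lambda>i j. c * B i j))"
    unfolding spectrum_def l by (simp only: mem_Collect_eq eigenvalue_cmat_scale[OF c])
qed

lemma spectral_radius_nonneg:
  assumes "0 < N"
  shows "0 \<le> spectral_radius (cmat N B)"
proof -
  obtain l :: complex where "spectral_radius (cmat N B) = norm l"
    using spectral_radius_mem_max(1)[OF cmat_carrier assms] by blast
  then show ?thesis
    by simp
qed

lemma spectral_radius_cmat_scale:
  assumes c: "0 < c" and N: "0 < N"
  shows "spectral_radius (cmat N (\<lambda>i j. c * B i j)) = c * spectral_radius (cmat N B)"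
proof -
  have "norm ` spectrum (cmat N (\<lambda>i j. c * B i j)) = (\<lambda>x. c * x) ` norm ` spectrum (cmat N B)"
    using c by (simp add: spectrum_cmat_scale image_image norm_mult)
  moreover have "finite (norm ` spectrum (cmat N B))" "norm ` spectrum (cmat N B) \<noteq> {}"
    using card_finite_spectrum(1)[OF cmat_carrier] spectrum_non_empty[OF cmat_carrier N] by auto
  moreover have "mono (\<lambda>x. c * x)"
    using c by (auto intro: monoI)
  ultimately show ?thesis
    unfolding spectral_radius_def by (simp add: mono_Max_commute)
qed

lemma eigenvalue_norm_le_matvec:
  assumes B_nonneg: "\<forall>i<N. \<forall>j<N. 0 \<le> B i j" and x_pos: "\<forall>i<N. 0 < x i"
    and ev: "eigenvalue (cmat N B) l"
  shows "\<exists>i<N. norm l * x i \<le> matvec N B x i"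
proof -
  obtain v where v: "v \<in> carrier_vec N" "v \<noteq> 0\<^sub>v N" and eq: "cmat N B *\<^sub>v v = l \<cdot>\<^sub>v v"
    using ev unfolding eigenvalue_def eigenvector_def by auto
  obtain j0 where j0: "j0 < N" "v $ j0 \<noteq> 0"
    using v by (auto simp: vec_eq_iff)
  \<comment> \<open>Compare at an index where \<open>|v| / x\<close> is maximal.\<close>
  define r where "r i = norm (v $ i) / x i" for i
  have fin: "finite (r ` {..<N})" and ne: "r ` {..<N} \<noteq> {}"
    using j0 by auto
  obtain i0 where i0: "i0 < N" and i0_max: "r i0 = Max (r ` {..<N})"
    using Max_in[OF fin ne] by auto
  have r_max: "r j \<le> r i0" if "j < N" for j
    unfolding i0_max using fin that by simp
  have "0 < r j0"
    using j0 x_pos unfolding r_def by auto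
  then have r_pos: "0 < r i0"
    using r_max[OF j0(1)] by linarith
  have "r i0 * (norm l * x i0) = norm l * norm (v $ i0)"
    using x_pos[rule_format, OF i0] by (simp add: r_def)
  also have "\<dots> = norm ((cmat N B *\<^sub>v v) $ i0)"
    using eq i0 v by (simp add: norm_mult)
  also have "\<dots> \<le> (\<Sum>j<N. norm (complex_of_real (B i0 j) * v $ j))"
    using i0 v by (simp add: norm_sum)
  also have "\<dots> \<le> (\<Sum>j<N. B i0 j * (r i0 * x j))"
  proof (intro sum_mono)
    fix j assume "j \<in> {..<N}"
    then have "norm (v $ j) \<le> r i0 * x j"
      using r_max x_pos unfolding r_def by (simp add: divide_le_eq)
    then show "norm (complex_of_real (B i0 j) * v $ j) \<le> B i0 j * (r i0 * x j)"
      using B_nonneg i0 \<open>j \<in> {..<N}\<close> by (simp add: norm_mult mult_left_mono)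
  qed
  also have "\<dots> = r i0 * matvec N B x i0"
    by (simp add: matvec_def sum_distrib_left algebra_simps)
  finally have "r i0 * (norm l * x i0) \<le> r i0 * matvec N B x i0" .
  then show ?thesis
    using i0 r_pos by auto
qed

lemma spectral_radius_lt_1_if_subinvariant:
  assumes B_nonneg: "\<forall>i<N. \<forall>j<N. 0 \<le> B i j" and x_pos: "\<forall>i<N. 0 < x i" and N: "0 < N"
    and sub: "\<forall>i<N. matvec N B x i < x i"
  shows "spectral_radius (cmat N B) < 1"
proof -
  obtain l where "eigenvalue (cmat N B) l" and radius: "spectral_radius (cmat N B) = norm l"
    using spectral_radius_mem_max(1)[OF cmat_carrier N] unfolding spectrum_def by auto
  then obtain i where i: "i < N" and "norm l * x i \<le> matvec N B x i"
    using eigenvalue_norm_le_matvec[OF B_nonneg x_pos] by blast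
  with sub have "norm l * x i < 1 * x i"
    by fastforce
  with i x_pos radius show ?thesis
    by (simp add: mult_less_cancel_right)
qed

lemma matvec_fixed_point_eq_0:
  assumes radius: "spectral_radius (cmat N B) < 1" and fixed: "\<forall>i<N. matvec N B z i = z i"
  shows "\<forall>i<N. z i = 0"
proof (rule ccontr)
  assume "\<not> ?thesis"
  then obtain j where j: "j < N" "z j \<noteq> 0"
    by blast
  define v where "v = vec N (\<lambda>i. complex_of_real (z i))"
  have "v \<in> carrier_vec N" "v \<noteq> 0\<^sub>v N"
    using j by (auto simp: v_def vec_eq_iff)
  moreover have "(\<Sum>j<N. complex_of_real (B i j) * v $ j) = 1 * v $ i" if "i < N" for i
  proof -
    have "complex_of_real (matvec N B z i) = complex_of_real (z i)"
      using fixed that by simp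
    then show ?thesis
      using that by (simp add: v_def matvec_def)
  qed
  ultimately have "1 \<in> spectrum (cmat N B)"
    unfolding spectrum_def eigenvalue_cmat_iff by blast
  then have "norm (1 :: complex) \<le> spectral_radius (cmat N B)"
    using spectral_radius_mem_max(2)[OF cmat_carrier, of N] j(1) by force
  with radius show False
    by simp
qed

section \<open>Neumann series\<close>

lemma funpow_matvec_eq_mat_pow:
  "i < N \<Longrightarrow> complex_of_real ((matvec N B ^^ k) w i)
     = (cmat N B ^\<^sub>m k *\<^sub>v vec N (\<lambda>j. complex_of_real (w j))) $ i"
proof (induction k arbitrary: w)
  case (Suc k)
  let ?w = "vec N (\<lambda>j. complex_of_real (w j))"
  have "cmat N B ^\<^sub>m Suc k *\<^sub>v ?w = cmat N B ^\<^sub>m k *\<^sub>v (cmat N B *\<^sub>v ?w)"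
    using assoc_mult_mat_vec[of "cmat N B ^\<^sub>m k" N N "cmat N B" N ?w] by simp
  moreover have "(matvec N B ^^ Suc k) w = (matvec N B ^^ k) (matvec N B w)"
    by (simp only: funpow_Suc_right comp_def)
  ultimately show ?case
    using Suc by (simp only: cmat_mult_vec_of_real)
qed simp

lemma funpow_matvec_scale:
  "(matvec N (\<lambda>i j. c * B i j) ^^ k) w i = c ^ k * (matvec N B ^^ k) w i"
proof (induction k arbitrary: i)
  case (Suc k)
  let ?X = "(matvec N (\<lambda>i j. c * B i j) ^^ k) w" and ?Y = "(matvec N B ^^ k) w"
  have "(matvec N (\<lambda>i j. c * B i j) ^^ Suc k) w i = (\<Sum>j<N. c * B i j * ?X j)"
    by (simp add: matvec_def[of N _ ?X])
  also have "\<dots> = c ^ Suc k * (\<Sum>j<N. B i j * ?Y j)"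
    by (simp add: Suc.IH sum_distrib_left mult_ac)
  also have "\<dots> = c ^ Suc k * (matvec N B ^^ Suc k) w i"
    by (simp add: matvec_def[of N _ ?Y])
  finally show ?case .
qed simp

lemma funpow_matvec_nonneg:
  assumes B_nonneg: "\<forall>i<N. \<forall>j<N. 0 \<le> B i j" and w_nonneg: "\<forall>i<N. 0 \<le> w i"
  shows "i < N \<Longrightarrow> 0 \<le> (matvec N B ^^ k) w i"
proof (induction k arbitrary: i)
  case (Suc k)
  then show ?case
    using matvec_nonneg[OF B_nonneg, of "(matvec N B ^^ k) w" i] by simp
qed (use w_nonneg in simp)

lemma funpow_matvec_geometric_bound:
  assumes N: "0 < N" and r: "0 < r" and radius: "spectral_radius (cmat N B) < r"
  shows "\<exists>D. \<forall>k. \<forall>i<N. \<bar>(matvec N B ^^ k) w i\<bar> \<le> D * r ^ k"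
proof -
  let ?A = "\<lambda>i j. (1 / r) * B i j"
  have "spectral_radius (cmat N ?A) < 1"
    using spectral_radius_cmat_scale[of "1 / r" N B] r radius N by (simp add: pos_divide_less_eq)
  then obtain c where c: "\<And>k. norm_bound (cmat N ?A ^\<^sub>m k) c"
    using spectral_radius_jnf_norm_bound_less_1_upper_triangular[OF cmat_carrier] by blast
  define D where "D = c * (\<Sum>j<N. \<bar>w j\<bar>)"
  have A_bound: "\<bar>(matvec N ?A ^^ k) w i\<bar> \<le> D" if i: "i < N" for k i
  proof -
    have "\<bar>(matvec N ?A ^^ k) w i\<bar> = norm ((cmat N ?A ^\<^sub>m k *\<^sub>v vec N (\<lambda>j. complex_of_real (w j))) $ i)"
      by (simp only: funpow_matvec_eq_mat_pow[OF i, symmetric] norm_of_real)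
    also have "\<dots> = norm (\<Sum>j<N. (cmat N ?A ^\<^sub>m k) $$ (i, j) * complex_of_real (w j))"
      using i by (simp add: scalar_prod_def row_def atLeast0LessThan)
    also have "\<dots> \<le> (\<Sum>j<N. norm ((cmat N ?A ^\<^sub>m k) $$ (i, j) * complex_of_real (w j)))"
      by (rule norm_sum)
    also have "\<dots> \<le> (\<Sum>j<N. c * \<bar>w j\<bar>)"
    proof (intro sum_mono)
      fix j assume "j \<in> {..<N}"
      then have "norm ((cmat N ?A ^\<^sub>m k) $$ (i, j)) \<le> c"
        using c[of k] i unfolding norm_bound_def by auto
      then show "norm ((cmat N ?A ^\<^sub>m k) $$ (i, j) * complex_of_real (w j)) \<le> c * \<bar>w j\<bar>"
        by (simp add: norm_mult mult_right_mono)
    qed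
    also have "\<dots> = D"
      by (simp add: D_def sum_distrib_left)
    finally show ?thesis .
  qed
  have "(\<lambda>i j. r * ?A i j) = B"
    using r by (simp add: fun_eq_iff)
  then have "(matvec N B ^^ k) w i = r ^ k * (matvec N ?A ^^ k) w i" for k i
    using funpow_matvec_scale[where c = r and B = ?A] by simp
  then have "\<bar>(matvec N B ^^ k) w i\<bar> \<le> D * r ^ k" if "i < N" for k i
    using A_bound[OF that, of k] r by (simp add: abs_mult mult_left_mono mult.commute)
  then show ?thesis
    by blast
qed

lemma neumann_series_solution:
  assumes B_nonneg: "\<forall>i<N. \<forall>j<N. 0 \<le> B i j" and radius: "spectral_radius (cmat N B) < 1"
  shows "\<exists>v. (\<forall>i<N. v i = w i + matvec N B v i) \<and> ((\<forall>i<N. 0 \<le> w i) \<longrightarrow> (\<forall>i<N. w i \<le> v i))"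
proof (cases "N = 0")
  case False
  define r where "r = (spectral_radius (cmat N B) + 1) / 2"
  have r: "0 < r" "r < 1" "spectral_radius (cmat N B) < r"
    using radius spectral_radius_nonneg[of N B] False unfolding r_def by auto
  define T where "T k = (matvec N B ^^ k) w" for k
  obtain D where D: "\<And>k i. i < N \<Longrightarrow> \<bar>T k i\<bar> \<le> D * r ^ k"
    using funpow_matvec_geometric_bound[OF _ r(1) r(3), of w] False unfolding T_def by blast
  have summable: "summable (\<lambda>k. T k i)" if i: "i < N" for i
  proof (rule summable_comparison_test')
    show "summable (\<lambda>k. D * r ^ k)"
      using r by (intro summable_mult summable_geometric) simp
    show "norm (T k i) \<le> D * r ^ k" for k
      using D[OF i] by simp
  qed
  define v where "v i = (\<Sum>k. T k i)" for i
  have T_Suc: "T (Suc k) i = (\<Sum>j<N. B i j * T k j)" for k i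
    by (simp add: T_def matvec_def[of N B "(matvec N B ^^ k) w"])
  have "v i = w i + matvec N B v i" if i: "i < N" for i
  proof -
    have "(\<Sum>k. T (Suc k) i) = (\<Sum>k. \<Sum>j<N. B i j * T k j)"
      unfolding T_Suc ..
    also have "\<dots> = (\<Sum>j<N. \<Sum>k. B i j * T k j)"
      by (rule suminf_sum) (use summable in \<open>auto intro: summable_mult\<close>)
    also have "\<dots> = matvec N B v i"
      unfolding matvec_def v_def by (intro sum.cong refl suminf_mult summable) simp
    finally show ?thesis
      using suminf_split_head[OF summable[OF i]] by (simp add: v_def T_def)
  qed
  moreover have "w i \<le> v i" if w_nonneg: "\<forall>i<N. 0 \<le> w i" and i: "i < N" for i
  proof -
    have "sum (\<lambda>k. T k i) {..<1} \<le> v i"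
      unfolding v_def using funpow_matvec_nonneg[OF B_nonneg w_nonneg i]
      by (intro sum_le_suminf summable[OF i]) (auto simp: T_def)
    then show ?thesis
      by (simp add: T_def)
  qed
  ultimately show ?thesis
    by blast
qed simp

lemma neumann_solution_ge:
  assumes B_nonneg: "\<forall>i<N. \<forall>j<N. 0 \<le> B i j" and radius: "spectral_radius (cmat N B) < 1"
    and w_nonneg: "\<forall>i<N. 0 \<le> w i" and z: "\<forall>i<N. z i = w i + matvec N B z i"
  shows "\<forall>i<N. w i \<le> z i"
proof -
  obtain u where u: "\<forall>i<N. u i = w i + matvec N B u i" and u_ge: "\<forall>i<N. w i \<le> u i"
    using neumann_series_solution[OF B_nonneg radius, of w] w_nonneg by blast
  have "matvec N B (\<lambda>j. z j - u j) i = z i - u i" if i: "i < N" for i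
  proof -
    have "z i = w i + matvec N B z i" "u i = w i + matvec N B u i"
      using z u i by blast+
    then show ?thesis
      unfolding matvec_diff by linarith
  qed
  then have "\<forall>i<N. z i - u i = 0"
    using matvec_fixed_point_eq_0[OF radius, of "\<lambda>j. z j - u j"] by blast
  with u_ge show ?thesis
    by fastforce
qed

lemma trancl_support_subinvariant_bound:
  fixes B :: "nat \<Rightarrow> nat \<Rightarrow> real"
  assumes path: "(a, b) \<in> {(i, j). i < N \<and> j < N \<and> B i j \<noteq> 0}\<^sup>+"
    and B_nonneg: "\<forall>i<N. \<forall>j<N. 0 \<le> B i j"
  shows "\<exists>q>0. \<exists>L\<ge>1. \<forall>s>0. \<forall>v. (\<forall>i<N. \<forall>j<N. B i j * v j \<le> s * v i) \<longrightarrow> q * v b \<le> s ^ L * v a"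
  using path
proof (induction rule: trancl_induct)
  case (base b)
  then have "0 < B a b"
    using B_nonneg by (auto simp: less_le)
  then show ?case
    using base by (intro exI[of _ "B a b"] conjI exI[of _ 1]) auto
next
  case (step b c)
  obtain q L where q: "0 < q" "1 \<le> L"
    and bound: "\<forall>s>0. \<forall>v. (\<forall>i<N. \<forall>j<N. B i j * v j \<le> s * v i) \<longrightarrow> q * v b \<le> s ^ L * v a"
    using step.IH by blast
  have bc: "b < N" "c < N" "0 < B b c"
    using step.hyps(2) B_nonneg by (auto simp: less_le)
  show ?case
  proof (intro exI[of _ "q * B b c"] conjI exI[of _ "Suc L"] allI impI)
    fix s :: real and v assume s: "0 < s" and sub: "\<forall>i<N. \<forall>j<N. B i j * v j \<le> s * v i"
    have "q * B b c * v c \<le> q * (s * v b)"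
      using sub bc q by (simp add: mult.assoc mult_left_mono)
    also have "\<dots> \<le> s * (s ^ L * v a)"
      using bound s sub by (simp add: mult.left_commute mult_left_mono)
    finally show "q * B b c * v c \<le> s ^ Suc L * v a"
      by simp
  qed (use q bc in auto)
qed

lemma exists_entrywise_subinvariant:
  assumes B_nonneg: "\<forall>i<N. \<forall>j<N. 0 \<le> B i j" and s: "0 < s" and radius: "spectral_radius (cmat N B) < s"
  shows "\<exists>v. (\<forall>i<N. 1 \<le> v i) \<and> (\<forall>i<N. \<forall>j<N. B i j * v j \<le> s * v i)"
proof (cases "N = 0")
  case False
  \<comment> \<open>The Neumann solution of \<open>v = 1 + B v / s\<close> does it.\<close>
  have scaled_radius: "spectral_radius (cmat N (\<lambda>i j. (1 / s) * B i j)) < 1"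
    using spectral_radius_cmat_scale[of "1 / s" N B] s radius False by (simp add: pos_divide_less_eq)
  have scaled_nonneg: "\<forall>i<N. \<forall>j<N. 0 \<le> (1 / s) * B i j"
    using B_nonneg s by simp
  obtain v where v: "\<forall>i<N. v i = 1 + matvec N (\<lambda>i j. (1 / s) * B i j) v i"
    and v_ge: "\<forall>i<N. 1 \<le> v i"
    using neumann_series_solution[OF scaled_nonneg scaled_radius, of "\<lambda>_. 1"] by auto
  have "B i j * v j \<le> s * v i" if i: "i < N" and j: "j < N" for i j
  proof -
    have "matvec N B v i / s = v i - 1"
      using v i matvec_scale_matrix[of N "1 / s" B v i] by simp
    then have Bv: "matvec N B v i = s * (v i - 1)"
      using s by (auto simp: field_simps)
    have "B i j * v j \<le> matvec N B v i"
      unfolding matvec_def using B_nonneg v_ge i j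
      by (intro member_le_sum) (auto intro: mult_nonneg_nonneg order_trans[OF zero_le_one])
    also have "\<dots> = s * (v i - 1)"
      by (rule Bv)
    also have "\<dots> \<le> s * v i"
      using s by simp
    finally show ?thesis .
  qed
  with v_ge show ?thesis
    by blast
qed simp

lemma spectral_radius_pos_if_cycle:
  assumes B_nonneg: "\<forall>i<N. \<forall>j<N. 0 \<le> B i j"
    and cycle: "(a, a) \<in> {(i, j). i < N \<and> j < N \<and> B i j \<noteq> 0}\<^sup>+"
  shows "0 < spectral_radius (cmat N B)"
proof (rule ccontr)
  assume not_pos: "\<not> ?thesis"
  have a: "a < N"
    using tranclD[OF cycle] by auto
  then have radius: "spectral_radius (cmat N B) = 0"
    using spectral_radius_nonneg[of N B] not_pos by simp
  obtain q L where q: "0 < q" "1 \<le> L"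
    and bound: "\<forall>s>0. \<forall>v. (\<forall>i<N. \<forall>j<N. B i j * v j \<le> s * v i) \<longrightarrow> q * v a \<le> s ^ L * v a"
    using trancl_support_subinvariant_bound[OF cycle B_nonneg] by blast
  \<comment> \<open>If \<open>\<rho>(B) = 0\<close>, entrywise \<open>s\<close>-subinvariant vectors exist for every \<open>s > 0\<close>, but the cycle forces \<open>q \<le> s\<^sup>L\<close>.\<close>
  define s where "s = min 1 q / 2"
  have s: "0 < s" "s \<le> 1" "s < q"
    using q unfolding s_def by auto
  obtain v where v_ge: "\<forall>i<N. 1 \<le> v i" and sub: "\<forall>i<N. \<forall>j<N. B i j * v j \<le> s * v i"
    using exists_entrywise_subinvariant[OF B_nonneg s(1)] radius s by auto
  have "q * v a \<le> s ^ L * v a"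
    using bound s(1) sub by blast
  also have "\<dots> \<le> s * v a"
    using s q v_ge a by (intro mult_right_mono power_decreasing[of 1 L s, simplified]) auto
  finally have "q \<le> s"
    using v_ge a by (intro mult_right_le_imp_le[of q "v a" s]) auto
  with s show False
    by simp
qed

section \<open>Choosing one row per index\<close>

text \<open>A choice \<open>c \<in> choices N K\<close> picks receiver \<open>c i\<close> of every transmitter \<open>i\<close>; for
  \<open>R = interference g \<mu>\<close>, the matrix \<open>select_rows R c\<close> is \<open>I - G\<close> for the corresponding \<open>G \<in> \<G>(\<mu>)\<close>.\<close>

definition choices :: "nat \<Rightarrow> (nat \<Rightarrow> nat) \<Rightarrow> (nat \<Rightarrow> nat) set" where
  "choices N K = (\<Pi>\<^sub>E i\<in>{..<N}. {..<K i})"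

definition select_rows :: "(nat \<Rightarrow> nat \<Rightarrow> nat \<Rightarrow> real) \<Rightarrow> (nat \<Rightarrow> nat) \<Rightarrow> nat \<Rightarrow> nat \<Rightarrow> real" where
  "select_rows R c = (\<lambda>i j. R i (c i) j)"

lemma finite_choices: "finite (choices N K)"
  by (simp add: choices_def finite_PiE)

lemma choices_nonempty:
  assumes "\<forall>i<N. 1 \<le> K i"
  shows "choices N K \<noteq> {}"
proof -
  have "(\<lambda>i\<in>{..<N}. 0) \<in> choices N K"
    using assms by (auto simp: choices_def)
  then show ?thesis
    by blast
qed

lemma choicesD: "c \<in> choices N K \<Longrightarrow> i < N \<Longrightarrow> c i < K i"
  by (auto simp: choices_def)

lemma choices_update: "c \<in> choices N K \<Longrightarrow> i < N \<Longrightarrow> k < K i \<Longrightarrow> c(i := k) \<in> choices N K"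
  by (auto simp: choices_def PiE_iff extensional_def)

lemma select_rows_nonneg:
  "\<forall>i<N. \<forall>k<K i. \<forall>j<N. 0 \<le> R i k j \<Longrightarrow> c \<in> choices N K \<Longrightarrow> \<forall>i<N. \<forall>j<N. 0 \<le> select_rows R c i j"
  by (simp add: select_rows_def choicesD)

lemma spectral_radius_lt_1_if_strict_supersolution:
  assumes R_nonneg: "\<forall>i<N. \<forall>k<K i. \<forall>j<N. 0 \<le> R i k j" and N: "0 < N"
    and p_nonneg: "\<forall>j<N. 0 \<le> p j" and strict: "\<forall>i<N. \<forall>k<K i. (\<Sum>j<N. R i k j * p j) < p i"
    and c: "c \<in> choices N K"
  shows "spectral_radius (cmat N (select_rows R c)) < 1"
proof (rule spectral_radius_lt_1_if_subinvariant[OF select_rows_nonneg[OF R_nonneg c] _ N])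
  have sub: "matvec N (select_rows R c) p i < p i" if "i < N" for i
    using strict choicesD[OF c] that by (simp add: matvec_def select_rows_def)
  then show "\<forall>i<N. matvec N (select_rows R c) p i < p i"
    by blast
  show "\<forall>i<N. 0 < p i"
    using sub matvec_nonneg[OF select_rows_nonneg[OF R_nonneg c] p_nonneg] by (meson le_less_trans)
qed

lemma neumann_solution_sum_less:
  assumes B'_nonneg: "\<forall>i<N. \<forall>j<N. 0 \<le> B' i j" and radius: "spectral_radius (cmat N B') < 1"
    and x: "\<forall>j<N. x j = 1 + matvec N B x j" and y: "\<forall>j<N. y j = 1 + matvec N B' y j"
    and same_rows: "\<forall>j<N. j \<noteq> i \<longrightarrow> (\<forall>l<N. B' j l = B j l)"
    and i: "i < N" and improve: "x i - 1 < matvec N B' x i"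
  shows "(\<Sum>j<N. x j) < (\<Sum>j<N. y j)"
proof -
  define w where "w j = 1 + matvec N B' x j - x j" for j
  have w_other: "w j = 0" if "j < N" "j \<noteq> i" for j
  proof -
    have "matvec N B' x j = matvec N B x j"
      unfolding matvec_def using same_rows that by (intro sum.cong) auto
    then show ?thesis
      using x that by (simp add: w_def)
  qed
  have w_i: "0 < w i"
    using improve by (simp add: w_def)
  have w_nonneg: "\<forall>j<N. 0 \<le> w j"
  proof (intro allI impI)
    fix j assume "j < N"
    then show "0 \<le> w j"
      using w_other w_i by (cases "j = i") auto
  qed
  have "y j - x j = w j + matvec N B' (\<lambda>l. y l - x l) j" if "j < N" for j
    using y that unfolding matvec_diff w_def by simp
  then have "\<forall>j<N. w j \<le> y j - x j"
    by (intro neumann_solution_ge[OF B'_nonneg radius w_nonneg]) blast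
  then have "(\<Sum>j<N. w j) \<le> (\<Sum>j<N. y j - x j)"
    by (intro sum_mono) simp
  then have "(\<Sum>j<N. w j) \<le> (\<Sum>j<N. y j) - (\<Sum>j<N. x j)"
    by (simp add: sum_subtractf)
  moreover have "w i \<le> (\<Sum>j<N. w j)"
    using w_nonneg i by (intro member_le_sum) auto
  ultimately show ?thesis
    using w_i by linarith
qed

lemma maximal_neumann_solution_row_slack:
  assumes R_nonneg: "\<forall>i<N. \<forall>k<K i. \<forall>j<N. 0 \<le> R i k j"
    and radius: "\<forall>c\<in>choices N K. spectral_radius (cmat N (select_rows R c)) < 1"
    and V: "\<And>c. c \<in> choices N K \<Longrightarrow> \<forall>i<N. V c i = 1 + matvec N (select_rows R c) (V c) i"
    and c0: "c0 \<in> choices N K" and c0_max: "\<And>c. c \<in> choices N K \<Longrightarrow> (\<Sum>i<N. V c i) \<le> (\<Sum>i<N. V c0 i)"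
    and i: "i < N" and k: "k < K i"
  shows "(\<Sum>j<N. R i k j * V c0 j) \<le> V c0 i - 1"
proof (rule ccontr)
  assume not_le: "\<not> ?thesis"
  define c' where "c' = c0(i := k)"
  have c': "c' \<in> choices N K"
    unfolding c'_def using choices_update[OF c0 i k] .
  have "(\<Sum>i<N. V c0 i) < (\<Sum>i<N. V c' i)"
  proof (rule neumann_solution_sum_less[OF select_rows_nonneg[OF R_nonneg c'] radius[rule_format, OF c']
        V[OF c0] V[OF c'] _ i])
    show "\<forall>j<N. j \<noteq> i \<longrightarrow> (\<forall>l<N. select_rows R c' j l = select_rows R c0 j l)"
      by (simp add: select_rows_def c'_def)
    show "V c0 i - 1 < matvec N (select_rows R c') (V c0) i"
      using not_le by (simp add: matvec_def select_rows_def c'_def)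
  qed
  with c0_max[OF c'] show False
    by simp
qed

lemma exists_uniform_supersolution:
  assumes R_nonneg: "\<forall>i<N. \<forall>k<K i. \<forall>j<N. 0 \<le> R i k j" and K_pos: "\<forall>i<N. 1 \<le> K i"
    and radius: "\<forall>c\<in>choices N K. spectral_radius (cmat N (select_rows R c)) < 1"
  shows "\<exists>x. (\<forall>i<N. 1 \<le> x i) \<and> (\<forall>i<N. \<forall>k<K i. (\<Sum>j<N. R i k j * x j) \<le> x i - 1)"
proof -
  have "\<exists>v. (\<forall>i<N. v i = 1 + matvec N (select_rows R c) v i) \<and> (\<forall>i<N. 1 \<le> v i)"
    if c: "c \<in> choices N K" for c
    using neumann_series_solution[OF select_rows_nonneg[OF R_nonneg c] radius[rule_format, OF c], of "\<lambda>_. 1"]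
    by auto
  then obtain V where V: "\<And>c. c \<in> choices N K \<Longrightarrow> \<forall>i<N. V c i = 1 + matvec N (select_rows R c) (V c) i"
    and V_ge: "\<And>c. c \<in> choices N K \<Longrightarrow> \<forall>i<N. 1 \<le> V c i"
    by metis
  \<comment> \<open>Policy iteration: a choice maximising the total of its Neumann solution admits no improving row.\<close>
  define total where "total c = (\<Sum>i<N. V c i)" for c
  have fin: "finite (total ` choices N K)" and ne: "total ` choices N K \<noteq> {}"
    using finite_choices choices_nonempty[OF K_pos] by auto
  obtain c0 where c0: "c0 \<in> choices N K" and c0_Max: "total c0 = Max (total ` choices N K)"
    using Max_in[OF fin ne] by auto
  have "total c \<le> total c0" if "c \<in> choices N K" for c
    unfolding c0_Max using fin that by simp
  then have "(\<Sum>j<N. R i k j * V c0 j) \<le> V c0 i - 1" if "i < N" "k < K i" for i k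
    using maximal_neumann_solution_row_slack[OF R_nonneg radius V c0 _ that] unfolding total_def by blast
  with V_ge[OF c0] show ?thesis
    by blast
qed

section \<open>Multicast power control\<close>

definition interference :: "(nat \<Rightarrow> nat \<Rightarrow> nat \<Rightarrow> real) \<Rightarrow> (nat \<Rightarrow> real) \<Rightarrow> nat \<Rightarrow> nat \<Rightarrow> nat \<Rightarrow> real" where
  "interference g mu i k j = (if j = i then 0 else mu i * g i k j / g i k i)"

lemma interference_scale: "interference g (\<lambda>i. beta * mu i) i k j = beta * interference g mu i k j"
  by (simp add: interference_def)

lemma interference_nonneg:
  assumes "\<forall>i<N. \<forall>k<K i. \<forall>j<N. 0 \<le> g i k j" and "\<forall>i<N. \<forall>k<K i. 0 < g i k i" and "\<forall>i<N. 0 \<le> mu i"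
  shows "\<forall>i<N. \<forall>k<K i. \<forall>j<N. 0 \<le> interference g mu i k j"
  using assms by (simp add: interference_def)

lemma sum_a_entry:
  assumes "i < N"
  shows "(\<Sum>j<N. a_entry g mu i k j * p j) = p i - (\<Sum>j<N. interference g mu i k j * p j)"
proof -
  have "(\<Sum>j<N. a_entry g mu i k j * p j)
      = (\<Sum>j<N. (if j = i then p j else 0) - interference g mu i k j * p j)"
    by (intro sum.cong) (auto simp: a_entry_def interference_def)
  also have "\<dots> = p i - (\<Sum>j<N. interference g mu i k j * p j)"
    using assms by (simp add: sum_subtractf)
  finally show ?thesis .
qed

lemma one_minus_G_mat_eq_cmat:
  "map_mat complex_of_real (1\<^sub>m N - G_mat N g mu c) = cmat N (select_rows (interference g mu) c)"
  by (rule eq_matI) (auto simp: cmat_def G_mat_def a_entry_def interference_def select_rows_def)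

lemma cmat_select_rows_restrict: "cmat N (select_rows R (restrict c {..<N})) = cmat N (select_rows R c)"
  by (rule eq_matI) (auto simp: cmat_def select_rows_def)

lemma beta_star_eq_Max:
  "beta_star N K g mu
     = 1 / Max ((\<lambda>c. spectral_radius (cmat N (select_rows (interference g mu) c))) ` choices N K)"
proof -
  let ?r = "\<lambda>c. spectral_radius (cmat N (select_rows (interference g mu) c))"
  have rho_G: "rho (1\<^sub>m N - G_mat N g mu c) = ?r c" for c
    by (simp add: rho_def one_minus_G_mat_eq_cmat)
  have "rho ` (\<lambda>G. 1\<^sub>m N - G) ` G_set N K g mu = ?r ` choices N K"
  proof (intro equalityI subsetI)
    fix x assume "x \<in> rho ` (\<lambda>G. 1\<^sub>m N - G) ` G_set N K g mu"
    then obtain c where c: "\<forall>i<N. c i < K i" and x: "x = ?r c"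
      by (auto simp: G_set_def rho_G)
    have "restrict c {..<N} \<in> choices N K"
      using c by (simp add: choices_def)
    moreover have "x = ?r (restrict c {..<N})"
      unfolding x cmat_select_rows_restrict ..
    ultimately show "x \<in> ?r ` choices N K"
      by blast
  next
    fix x assume "x \<in> ?r ` choices N K"
    then obtain c where "c \<in> choices N K" and x: "x = ?r c"
      by blast
    then have "G_mat N g mu c \<in> G_set N K g mu"
      unfolding G_set_def using choicesD by blast
    then show "x \<in> rho ` (\<lambda>G. 1\<^sub>m N - G) ` G_set N K g mu"
      unfolding x rho_G[symmetric] by blast
  qed
  then show ?thesis
    by (simp add: beta_star_def)
qed

lemma spectral_radius_interference_pos:
  assumes N: "0 < N" and g_nonneg: "\<forall>i<N. \<forall>k<K i. \<forall>j<N. 0 \<le> g i k j"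
    and g_direct_pos: "\<forall>i<N. \<forall>k<K i. 0 < g i k i" and mu_nonneg: "\<forall>i<N. 0 \<le> mu i"
    and irred: "\<forall>G\<in>G_set N K g mu. irreducible_mat (1\<^sub>m N - G)" and c: "c \<in> choices N K"
  shows "0 < spectral_radius (cmat N (select_rows (interference g mu) c))"
proof (rule spectral_radius_pos_if_cycle)
  let ?B = "select_rows (interference g mu) c" and ?M = "1\<^sub>m N - G_mat N g mu c"
  show "\<forall>i<N. \<forall>j<N. 0 \<le> ?B i j"
    using select_rows_nonneg[OF interference_nonneg[OF g_nonneg g_direct_pos mu_nonneg] c] .
  have "G_mat N g mu c \<in> G_set N K g mu"
    using choicesD[OF c] unfolding G_set_def by blast
  then have "irreducible_mat ?M"
    using irred by blast
  moreover have dim: "dim_row ?M = N"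
    by (simp add: G_mat_def)
  ultimately have "(0, 0) \<in> {(a, b). a < N \<and> b < N \<and> ?M $$ (a, b) \<noteq> 0}\<^sup>+"
    using N unfolding irreducible_mat_def by auto
  also have "{(a, b). a < N \<and> b < N \<and> ?M $$ (a, b) \<noteq> 0} = {(i, j). i < N \<and> j < N \<and> ?B i j \<noteq> 0}"
    by (auto simp: G_mat_def a_entry_def interference_def select_rows_def)
  finally show "(0, 0) \<in> {(i, j). i < N \<and> j < N \<and> ?B i j \<noteq> 0}\<^sup>+" .
qed

lemma Ball_mult_less_iff_Max:
  fixes f :: "'a \<Rightarrow> real"
  assumes "finite A" "A \<noteq> {}" "0 \<le> beta"
  shows "(\<forall>a\<in>A. beta * f a < 1) \<longleftrightarrow> beta * Max (f ` A) < 1"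
proof
  assume "\<forall>a\<in>A. beta * f a < 1"
  moreover have "Max (f ` A) \<in> f ` A"
    using assms by simp
  ultimately show "beta * Max (f ` A) < 1"
    by fastforce
next
  assume less: "beta * Max (f ` A) < 1"
  have "beta * f a \<le> beta * Max (f ` A)" if "a \<in> A" for a
    using assms that by (intro mult_left_mono) simp_all
  with less show "\<forall>a\<in>A. beta * f a < 1"
    by (meson le_less_trans)
qed

lemma member_le_double_sum:
  fixes f :: "nat \<Rightarrow> nat \<Rightarrow> real"
  assumes nonneg: "\<forall>i<N. \<forall>k<K i. 0 \<le> f i k" and i: "i < N" and k: "k < K i"
  shows "f i k \<le> (\<Sum>i<N. \<Sum>k<K i. f i k)"
proof -
  have "f i k \<le> (\<Sum>k<K i. f i k)"
    by (rule member_le_sum) (use nonneg i k in auto)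
  also have "\<dots> \<le> (\<Sum>i<N. \<Sum>k<K i. f i k)"
    by (rule member_le_sum) (use nonneg i in \<open>auto intro: sum_nonneg\<close>)
  finally show ?thesis .
qed

lemma spectral_radius_interference_scale:
  assumes "0 < beta" and "0 < N"
  shows "spectral_radius (cmat N (select_rows (interference g (\<lambda>i. beta * mu i)) c))
    = beta * spectral_radius (cmat N (select_rows (interference g mu) c))"
proof -
  have "select_rows (interference g (\<lambda>i. beta * mu i)) c = (\<lambda>i j. beta * select_rows (interference g mu) c i j)"
    by (simp add: select_rows_def interference_scale)
  then show ?thesis
    using spectral_radius_cmat_scale[OF assms] by simp
qed

lemma n_entry_pos:
  "0 < sigma2 \<Longrightarrow> 0 < mu i \<Longrightarrow> 0 < g i k i \<Longrightarrow> 0 < n_entry g sigma2 mu i k"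
  by (simp add: n_entry_def)

lemma spectral_radii_lt_if_feasible:
  assumes N: "0 < N"
    and g_nonneg: "\<forall>i<N. \<forall>k<K i. \<forall>j<N. 0 \<le> g i k j" and g_direct_pos: "\<forall>i<N. \<forall>k<K i. 0 < g i k i"
    and sigma_pos: "0 < sigma2" and mu_pos: "\<forall>i<N. 0 < mu i" and beta: "0 < beta"
    and p_nonneg: "\<forall>j<N. 0 \<le> p j" and feasible: "A_ge_n N K g sigma2 (\<lambda>i. beta * mu i) p"
  shows "\<forall>c\<in>choices N K. beta * spectral_radius (cmat N (select_rows (interference g mu) c)) < 1"
proof -
  let ?R = "interference g (\<lambda>i. beta * mu i)"
  have "\<forall>i<N. 0 \<le> beta * mu i"
    using mu_pos beta by (simp add: less_imp_le)
  then have R_nonneg: "\<forall>i<N. \<forall>k<K i. \<forall>j<N. 0 \<le> ?R i k j"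
    by (rule interference_nonneg[OF g_nonneg g_direct_pos])
  have strict: "\<forall>i<N. \<forall>k<K i. (\<Sum>j<N. ?R i k j * p j) < p i"
  proof (intro allI impI)
    fix i k assume i: "i < N" and k: "k < K i"
    have "0 < n_entry g sigma2 (\<lambda>i. beta * mu i) i k"
      using i k mu_pos g_direct_pos beta by (intro n_entry_pos sigma_pos) simp_all
    also have "\<dots> \<le> (\<Sum>j<N. a_entry g (\<lambda>i. beta * mu i) i k j * p j)"
      using feasible i k unfolding A_ge_n_def by blast
    finally show "(\<Sum>j<N. ?R i k j * p j) < p i"
      by (simp add: sum_a_entry[OF i])
  qed
  show ?thesis
    using spectral_radius_lt_1_if_strict_supersolution[OF R_nonneg N p_nonneg strict]
      spectral_radius_interference_scale[OF beta N] by simp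
qed

lemma feasible_if_spectral_radii_lt:
  assumes N: "0 < N" and K_pos: "\<forall>i<N. 1 \<le> K i"
    and g_nonneg: "\<forall>i<N. \<forall>k<K i. \<forall>j<N. 0 \<le> g i k j" and g_direct_pos: "\<forall>i<N. \<forall>k<K i. 0 < g i k i"
    and sigma_pos: "0 < sigma2" and mu_pos: "\<forall>i<N. 0 < mu i" and beta: "0 < beta"
    and radii: "\<forall>c\<in>choices N K. beta * spectral_radius (cmat N (select_rows (interference g mu) c)) < 1"
  shows "\<exists>p. (\<forall>j<N. 0 \<le> p j) \<and> A_ge_n N K g sigma2 (\<lambda>i. beta * mu i) p"
proof -
  let ?R = "interference g (\<lambda>i. beta * mu i)" and ?n = "n_entry g sigma2 (\<lambda>i. beta * mu i)"
  have "\<forall>i<N. 0 \<le> beta * mu i"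
    using mu_pos beta by (simp add: less_imp_le)
  then have R_nonneg: "\<forall>i<N. \<forall>k<K i. \<forall>j<N. 0 \<le> ?R i k j"
    by (rule interference_nonneg[OF g_nonneg g_direct_pos])
  have "\<forall>c\<in>choices N K. spectral_radius (cmat N (select_rows ?R c)) < 1"
    unfolding spectral_radius_interference_scale[OF beta N] by (rule radii)
  then obtain x where x_ge: "\<forall>i<N. 1 \<le> x i"
    and x_sup: "\<forall>i<N. \<forall>k<K i. (\<Sum>j<N. ?R i k j * x j) \<le> x i - 1"
    using exists_uniform_supersolution[OF R_nonneg K_pos] by blast
  \<comment> \<open>Every constraint holds for \<open>x\<close> with slack at least 1, so a large multiple of \<open>x\<close> absorbs the noise.\<close>
  define t where "t = (\<Sum>i<N. \<Sum>k<K i. ?n i k)"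
  have n_nonneg: "\<forall>i<N. \<forall>k<K i. 0 \<le> ?n i k"
  proof (intro allI impI)
    fix i k assume "i < N" "k < K i"
    then show "0 \<le> ?n i k"
      using mu_pos g_direct_pos beta by (intro less_imp_le n_entry_pos sigma_pos) simp_all
  qed
  have t_nonneg: "0 \<le> t"
    unfolding t_def using n_nonneg by (intro sum_nonneg) auto
  have "?n i k \<le> (\<Sum>j<N. a_entry g (\<lambda>i. beta * mu i) i k j * (t * x j))" if i: "i < N" and k: "k < K i" for i k
  proof -
    have "?n i k \<le> t * 1"
      unfolding t_def using member_le_double_sum[OF n_nonneg i k] by simp
    also have "\<dots> \<le> t * (x i - (\<Sum>j<N. ?R i k j * x j))"
      using x_sup[rule_format, OF i k] t_nonneg by (intro mult_left_mono) auto
    also have "\<dots> = t * x i - (\<Sum>j<N. ?R i k j * (t * x j))"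
      by (simp add: sum_distrib_left right_diff_distrib mult_ac)
    also have "\<dots> = (\<Sum>j<N. a_entry g (\<lambda>i. beta * mu i) i k j * (t * x j))"
      using sum_a_entry[OF i, where p = "\<lambda>j. t * x j"] by simp
    finally show ?thesis .
  qed
  then have "A_ge_n N K g sigma2 (\<lambda>i. beta * mu i) (\<lambda>j. t * x j)"
    unfolding A_ge_n_def by blast
  moreover have "0 \<le> t * x j" if "j < N" for j
    using x_ge that t_nonneg by (meson order_trans zero_le_one mult_nonneg_nonneg)
  ultimately show ?thesis
    by (intro exI[of _ "\<lambda>j. t * x j"] conjI) auto
qed

lemma Max_spectral_radius_interference_pos:
  assumes N: "0 < N" and K_pos: "\<forall>i<N. 1 \<le> K i"
    and g_nonneg: "\<forall>i<N. \<forall>k<K i. \<forall>j<N. 0 \<le> g i k j" and g_direct_pos: "\<forall>i<N. \<forall>k<K i. 0 < g i k i"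
    and mu_pos: "\<forall>i<N. 0 < mu i" and irred: "\<forall>G\<in>G_set N K g mu. irreducible_mat (1\<^sub>m N - G)"
  shows "0 < Max ((\<lambda>c. spectral_radius (cmat N (select_rows (interference g mu) c))) ` choices N K)"
proof -
  let ?r = "\<lambda>c. spectral_radius (cmat N (select_rows (interference g mu) c))"
  have "Max (?r ` choices N K) \<in> ?r ` choices N K"
    using finite_choices choices_nonempty[OF K_pos] by simp
  moreover have "0 < ?r c" if "c \<in> choices N K" for c
    using spectral_radius_interference_pos[OF N g_nonneg g_direct_pos _ irred that] mu_pos
    by (simp add: less_imp_le)
  ultimately show ?thesis
    by force
qed

lemma feasible_iff_less_beta_star:
  assumes N: "0 < N" and K_pos: "\<forall>i<N. 1 \<le> K i"
    and g_nonneg: "\<forall>i<N. \<forall>k<K i. \<forall>j<N. 0 \<le> g i k j" and g_direct_pos: "\<forall>i<N. \<forall>k<K i. 0 < g i k i"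
    and sigma_pos: "0 < sigma2" and mu_pos: "\<forall>i<N. 0 < mu i"
    and irred: "\<forall>G\<in>G_set N K g mu. irreducible_mat (1\<^sub>m N - G)" and beta: "0 < beta"
  shows "(\<exists>p. (\<forall>j<N. 0 \<le> p j) \<and> A_ge_n N K g sigma2 (\<lambda>i. beta * mu i) p) \<longleftrightarrow> beta < beta_star N K g mu"
proof -
  let ?r = "\<lambda>c. spectral_radius (cmat N (select_rows (interference g mu) c))"
  have "(\<exists>p. (\<forall>j<N. 0 \<le> p j) \<and> A_ge_n N K g sigma2 (\<lambda>i. beta * mu i) p)
      \<longleftrightarrow> (\<forall>c\<in>choices N K. beta * ?r c < 1)"
    using spectral_radii_lt_if_feasible[OF N g_nonneg g_direct_pos sigma_pos mu_pos beta]
      feasible_if_spectral_radii_lt[OF N K_pos g_nonneg g_direct_pos sigma_pos mu_pos beta] by blast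
  also have "\<dots> \<longleftrightarrow> beta * Max (?r ` choices N K) < 1"
    using finite_choices choices_nonempty[OF K_pos] beta by (intro Ball_mult_less_iff_Max) simp_all
  also have "\<dots> \<longleftrightarrow> beta < beta_star N K g mu"
    using Max_spectral_radius_interference_pos[OF N K_pos g_nonneg g_direct_pos mu_pos irred]
    by (simp add: beta_star_eq_Max pos_less_divide_eq)
  finally show ?thesis .
qed

theorem mainTheorem6:
  fixes N :: nat and K :: "nat \<Rightarrow> nat" and g :: "nat \<Rightarrow> nat \<Rightarrow> nat \<Rightarrow> real"
    and sigma2 :: real and mu :: "nat \<Rightarrow> real"
  assumes N_pos: "N \<ge> 1"
    and K_pos: "\<forall>i<N. K i \<ge> 1"
    and g_nonneg: "\<forall>i<N. \<forall>k<K i. \<forall>j<N. g i k j \<ge> 0"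
    and g_direct_pos: "\<forall>i<N. \<forall>k<K i. g i k i > 0"
    and sigma_pos: "sigma2 > 0"
    and mu_pos: "\<forall>i<N. mu i > 0"
    and irred: "\<forall>G\<in>G_set N K g mu. irreducible_mat (1\<^sub>m N - G)"
  shows "(\<forall>beta>0. (\<exists>p. (\<forall>j<N. p j \<ge> 0) \<and> A_ge_n N K g sigma2 (\<lambda>i. beta * mu i) p)
                   \<longleftrightarrow> beta < beta_star N K g mu)
         \<and> Sup {beta. beta > 0 \<and> (\<exists>p. (\<forall>j<N. p j \<ge> 0) \<and> A_ge_n N K g sigma2 (\<lambda>i. beta * mu i) p)}
             = beta_star N K g mu"
proof -
  have N: "0 < N"
    using N_pos by simp
  note feasible_iff = feasible_iff_less_beta_star[OF N K_pos g_nonneg g_direct_pos sigma_pos mu_pos irred]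
  have beta_star_pos: "0 < beta_star N K g mu"
    using Max_spectral_radius_interference_pos[OF N K_pos g_nonneg g_direct_pos mu_pos irred]
    by (simp add: beta_star_eq_Max)
  have "beta > 0 \<and> (\<exists>p. (\<forall>j<N. p j \<ge> 0) \<and> A_ge_n N K g sigma2 (\<lambda>i. beta * mu i) p)
      \<longleftrightarrow> beta \<in> {0<..<beta_star N K g mu}" for beta
    by (cases "0 < beta") (simp_all add: feasible_iff)
  then have "{beta. beta > 0 \<and> (\<exists>p. (\<forall>j<N. p j \<ge> 0) \<and> A_ge_n N K g sigma2 (\<lambda>i. beta * mu i) p)}
      = {0<..<beta_star N K g mu}"
    by blast
  then show ?thesis
    using feasible_iff beta_star_pos by simp
qed

end
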